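(* Let $0\le\alpha<1$ and $\theta>-\alpha$. For all $n=1,2,\dots$ and $s>0$, $$I_{n,\alpha,\theta}(s)=n\int_{\min\{s^{-1},1\}}^1\frac{(1-v)^{\theta+\alpha-1}}{v^{\alpha+1}}I_{n-1,\alpha,\theta+\alpha}\Big(\frac{1-v}{v}\Big)dv.$$
   Context: $\Delta_n=\{(v_1,\dots,v_n):v_i\ge0,\ \sum v_i\le1\}$. $I_{0,\alpha,\theta}\equiv1$ and, for $n\ge1$ and $s>0$, $I_{n,\alpha,\theta}(s)=\int_{\Delta_n}\prod_{i=1}^n\frac{\mathbf 1_{[1,\infty)}(sv_i)}{v_i^{\alpha+1}}\big(1-\sum_{j=1}^nv_j\big)^{\theta+\alpha n-1}dv_1\cdots dv_n$. *)

theory Defs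
  imports "HOL-Analysis.Analysis"
begin

definition lebn :: "nat \<Rightarrow> (nat \<Rightarrow> real) measure" where
  "lebn n = (\<Pi>\<^sub>M i\<in>{..<n}. lborel)"

definition Delta :: "nat \<Rightarrow> (nat \<Rightarrow> real) set" where
  "Delta n = {v. v \<in> space (lebn n) \<and> (\<forall>i<n. 0 \<le> v i) \<and> (\<Sum>j<n. v j) \<le> 1}"

definition Ifun :: "nat \<Rightarrow> real \<Rightarrow> real \<Rightarrow> real \<Rightarrow> ennreal" where
  "Ifun n \<alpha> \<theta> s =
    (if n = 0 then 1 else
     (\<integral>\<^sup>+ v \<in> Delta n.
        ennreal ((\<Prod>i<n. indicator {1..} (s * v i) / v i powr (\<alpha> + 1))
                 * (1 - (\<Sum>j<n. v j)) powr (\<theta> + \<alpha> * real n - 1))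
      \<partial>lebn n))"

end

theory Submission
  imports Defs
begin

text \<open>Up to the null set where two coordinates coincide, the simplex splits into the n regions
  on which a given coordinate is the smallest one. Permuting coordinates preserves both Lebesgue
  measure and the integrand, so the n regions contribute equally. On the region where the last
  coordinate v is the minimum, substitute the others as v_i = (1 - v) w_i: the Jacobian is
  (1 - v)^(n-1), 1 - \<Sum> v_j becomes (1 - v)(1 - \<Sum> w_j), the minimality condition v \<le> (1 - v) w_i
  becomes ((1 - v) / v) w_i \<ge> 1, and s v \<ge> 1 makes the constraints s v_i \<ge> 1 redundant.
  What remains of the inner integral is I(n-1, \<alpha>, \<theta> + \<alpha>) at (1 - v) / v.\<close>

lemma product_sigma_finite_lborel: "product_sigma_finite (\<lambda>_::'i. lborel::real measure)"
  unfolding product_sigma_finite_def by (auto intro: lborel.sigma_finite_measure_axioms)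

lemma nn_integral_PiM_lborel_reindex:
  fixes I :: "'i set" and t :: "'i \<Rightarrow> 'i"
  assumes I: "finite I" and t: "bij_betw t I I"
    and h[measurable]: "h \<in> borel_measurable (PiM I (\<lambda>_. lborel::real measure))"
  shows "(\<integral>\<^sup>+x. h (\<lambda>i\<in>I. x (t i)) \<partial>PiM I (\<lambda>_. lborel)) = (\<integral>\<^sup>+x. h x \<partial>PiM I (\<lambda>_. lborel))"
proof -
  interpret product_sigma_finite "\<lambda>_::'i. lborel::real measure"
    by (rule product_sigma_finite_lborel)
  let ?P = "PiM I (\<lambda>_. lborel::real measure)"
  define S where "S = (\<lambda>x::'i\<Rightarrow>real. \<lambda>i\<in>I. x (t i))"
  define u where "u = the_inv_into I t"
  have tI: "t i \<in> I" if "i \<in> I" for i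
    using t that by (auto simp: bij_betw_def)
  have u: "u j \<in> I" "t (u j) = j" if "j \<in> I" for j
    using t that by (auto simp: u_def bij_betw_def intro: the_inv_into_into f_the_inv_into_f)
  have ut: "u (t i) = i" if "i \<in> I" for i
    using t that by (auto simp: u_def bij_betw_def the_inv_into_f_f)
  have S[measurable]: "S \<in> measurable ?P ?P"
    unfolding S_def using tI by measurable
  have "distr ?P ?P S = ?P"
  proof (rule PiM_eqI[OF I])
    fix A assume A: "\<And>i. i \<in> I \<Longrightarrow> A i \<in> sets (lborel::real measure)"
    have "S -` PiE I A \<inter> space ?P = PiE I (\<lambda>j. A (u j))"
      using tI u ut by (fastforce simp: S_def space_PiM PiE_def Pi_def extensional_def)
    moreover have "PiE I A \<in> sets ?P"
      using A I by (intro sets_PiM_I_finite) auto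
    ultimately have "emeasure (distr ?P ?P S) (PiE I A) = emeasure ?P (PiE I (\<lambda>j. A (u j)))"
      by (simp add: emeasure_distr)
    also have "\<dots> = (\<Prod>j\<in>I. emeasure lborel (A (u j)))"
      using A I u by (subst emeasure_PiM) auto
    also have "\<dots> = (\<Prod>i\<in>I. emeasure lborel (A i))"
      using prod.reindex_bij_betw[OF t, of "\<lambda>j. emeasure lborel (A (u j))"] ut by simp
    finally show "emeasure (distr ?P ?P S) (PiE I A) = (\<Prod>i\<in>I. emeasure lborel (A i))" .
  qed simp
  moreover have "(\<integral>\<^sup>+x. h (S x) \<partial>?P) = (\<integral>\<^sup>+x. h x \<partial>distr ?P ?P S)"
    by (subst nn_integral_distr) auto
  ultimately show ?thesis by (simp add: S_def)
qed

lemma nn_integral_PiM_lborel_scale: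
  fixes I :: "'i set" and c :: real
  assumes I: "finite I" and c: "c > 0"
    and h[measurable]: "h \<in> borel_measurable (PiM I (\<lambda>_. lborel::real measure))"
  shows "(\<integral>\<^sup>+x. h x \<partial>PiM I (\<lambda>_. lborel)) =
         ennreal (c ^ card I) * (\<integral>\<^sup>+x. h (\<lambda>i\<in>I. c * x i) \<partial>PiM I (\<lambda>_. lborel))"
proof -
  interpret product_sigma_finite "\<lambda>_::'i. lborel::real measure"
    by (rule product_sigma_finite_lborel)
  let ?P = "PiM I (\<lambda>_. lborel::real measure)"
  define S where "S = (\<lambda>x::'i\<Rightarrow>real. \<lambda>i\<in>I. c * x i)"
  have S[measurable]: "S \<in> measurable ?P ?P"
    unfolding S_def by measurable
  have sets_scaled: "(*) c -` B \<in> sets borel" if "B \<in> sets borel" for B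
    using measurable_sets[OF _ that, of "(*) c" borel] by simp
  have emeasure_scaled: "emeasure lborel ((*) c -` B) = ennreal (inverse c) * emeasure lborel B"
    if "B \<in> sets borel" for B
  proof -
    have "emeasure lborel ((*) c -` B) = emeasure (distr lborel borel ((*) c)) B"
      using that by (subst emeasure_distr) auto
    also have "\<dots> = emeasure (density lborel (\<lambda>_. ennreal (inverse \<bar>c\<bar>))) B"
      using c by (subst lborel_distr_mult) auto
    finally show ?thesis
      using that c by (simp add: emeasure_density_const)
  qed
  have "density (distr ?P ?P S) (\<lambda>_. ennreal (c ^ card I)) = ?P"
  proof (rule PiM_eqI[OF I])
    fix A assume A: "\<And>i. i \<in> I \<Longrightarrow> A i \<in> sets (lborel::real measure)"
    have "S -` PiE I A \<inter> space ?P = PiE I (\<lambda>i. (*) c -` A i)"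
      by (auto simp: S_def space_PiM PiE_def Pi_def extensional_def)
    moreover have "PiE I A \<in> sets ?P"
      using A I by (intro sets_PiM_I_finite) auto
    ultimately have "emeasure (density (distr ?P ?P S) (\<lambda>_. ennreal (c ^ card I))) (PiE I A)
        = ennreal (c ^ card I) * emeasure ?P (PiE I (\<lambda>i. (*) c -` A i))"
      by (simp add: emeasure_density_const emeasure_distr)
    also have "emeasure ?P (PiE I (\<lambda>i. (*) c -` A i))
        = ennreal (inverse c) ^ card I * (\<Prod>i\<in>I. emeasure lborel (A i))"
      using A I by (subst emeasure_PiM) (auto simp: emeasure_scaled prod.distrib intro: sets_scaled)
    also have "ennreal (c ^ card I) * (ennreal (inverse c) ^ card I * (\<Prod>i\<in>I. emeasure lborel (A i)))
        = (\<Prod>i\<in>I. emeasure lborel (A i))"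
      using c by (simp add: mult.assoc[symmetric] ennreal_power[symmetric] ennreal_mult'[symmetric]
          power_mult_distrib[symmetric])
    finally show "emeasure (density (distr ?P ?P S) (\<lambda>_. ennreal (c ^ card I))) (PiE I A)
        = (\<Prod>i\<in>I. emeasure lborel (A i))" .
  qed simp
  moreover have "(\<integral>\<^sup>+x. h x \<partial>density (distr ?P ?P S) (\<lambda>_. ennreal (c ^ card I)))
      = ennreal (c ^ card I) * (\<integral>\<^sup>+x. h (S x) \<partial>?P)"
    by (simp add: nn_integral_density nn_integral_distr nn_integral_cmult)
  ultimately show ?thesis by (simp add: S_def)
qed

lemma AE_PiM_lborel_coords_neq:
  fixes I :: "'i set"
  assumes I: "finite I" and ij: "i \<in> I" "j \<in> I" "i \<noteq> j"
  shows "AE x in PiM I (\<lambda>_. lborel::real measure). x i \<noteq> x j"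
proof -
  interpret product_sigma_finite "\<lambda>_::'i. lborel::real measure"
    by (rule product_sigma_finite_lborel)
  let ?P = "PiM I (\<lambda>_. lborel::real measure)" and ?Q = "PiM (I - {i}) (\<lambda>_. lborel::real measure)"
  define N where "N = {x \<in> space ?P. x i = x j}"
  have N[measurable]: "N \<in> sets ?P"
    unfolding N_def using ij by measurable
  have I_eq: "I = insert i (I - {i})"
    using ij by auto
  have "emeasure ?P N = (\<integral>\<^sup>+x. indicator N x \<partial>PiM (insert i (I - {i})) (\<lambda>_. lborel))"
    using N I_eq by simp
  also have "\<dots> = (\<integral>\<^sup>+x. (\<integral>\<^sup>+y. indicator N (x(i:=y)) \<partial>lborel) \<partial>?Q)"
    using I N I_eq by (subst product_nn_integral_insert) auto
  also have "\<dots> = (\<integral>\<^sup>+x. (\<integral>\<^sup>+y. indicator {x j} y \<partial>lborel) \<partial>?Q)"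
  proof (intro nn_integral_cong)
    fix x y assume "x \<in> space ?Q"
    then have "x(i:=y) \<in> space ?P"
      using ij by (auto simp: space_PiM PiE_def extensional_def)
    then show "indicator N (x(i:=y)) = (indicator {x j} y :: ennreal)"
      using ij by (auto simp: N_def indicator_def)
  qed
  finally have "N \<in> null_sets ?P"
    using N by auto
  then show ?thesis
    by (rule AE_I') (auto simp: N_def)
qed

definition Ifun_integrand :: "nat \<Rightarrow> real \<Rightarrow> real \<Rightarrow> real \<Rightarrow> (nat \<Rightarrow> real) \<Rightarrow> ennreal" where
  "Ifun_integrand n \<alpha> \<theta> s v =
    ennreal ((\<Prod>i<n. indicator {1..} (s * v i) / v i powr (\<alpha> + 1))
      * (1 - (\<Sum>j<n. v j)) powr (\<theta> + \<alpha> * real n - 1)) * indicator (Delta n) v"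

definition min_coord :: "nat \<Rightarrow> nat \<Rightarrow> (nat \<Rightarrow> real) set" where
  "min_coord n k = {x. \<forall>j<n. x k \<le> x j}"

lemma sets_Delta[measurable]: "Delta n \<in> sets (lebn n)"
proof -
  have "Delta n = {v \<in> space (lebn n). (\<forall>i\<in>{..<n}. 0 \<le> v i) \<and> (\<Sum>j<n. v j) \<le> 1}"
    unfolding Delta_def by auto
  also have "\<dots> \<in> sets (lebn n)"
    unfolding lebn_def by measurable
  finally show ?thesis .
qed

lemma borel_measurable_Ifun_integrand[measurable]:
  "Ifun_integrand n \<alpha> \<theta> s \<in> borel_measurable (lebn n)"
proof -
  have "(\<lambda>v. ennreal ((\<Prod>i<n. indicator {1..} (s * v i) / v i powr (\<alpha> + 1))
      * (1 - (\<Sum>j<n. v j)) powr (\<theta> + \<alpha> * real n - 1))) \<in> borel_measurable (lebn n)"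
    unfolding lebn_def by measurable
  then show ?thesis
    unfolding Ifun_integrand_def by measurable
qed

lemma sets_min_coord:
  assumes "k < n"
  shows "{x \<in> space (lebn n). x \<in> min_coord n k} \<in> sets (lebn n)"
proof -
  have "{x \<in> space (lebn n). x \<in> min_coord n k} = {x \<in> space (lebn n). \<forall>j\<in>{..<n}. x k \<le> x j}"
    by (auto simp: min_coord_def)
  also have "\<dots> \<in> sets (lebn n)"
  proof -
    have coord: "(\<lambda>x. x j) \<in> borel_measurable (lebn n)" if "j < n" for j
      using that measurable_component_singleton[of j "{..<n}" "\<lambda>_. lborel"] by (simp add: lebn_def)
    show ?thesis
      by measurable (use assms coord in \<open>auto simp: pred_def intro!: borel_measurable_le\<close>)
  qed
  finally show ?thesis .
qed

lemma borel_measurable_indicator_min_coord[measurable]: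
  "k < n \<Longrightarrow> (\<lambda>x. indicator (min_coord n k) x :: ennreal) \<in> borel_measurable (lebn n)"
  by (rule borel_measurable_indicator') (rule sets_min_coord)

lemma measurable_fun_upd_lebn[measurable]: "(\<lambda>x. x(m := v)) \<in> measurable (lebn m) (lebn (Suc m))"
  unfolding lebn_def lessThan_Suc by (rule measurable_fun_upd[where J="{..<m}"]) auto

lemma Ifun_eq_nn_integral_integrand: "Ifun n \<alpha> \<theta> s = (\<integral>\<^sup>+v. Ifun_integrand n \<alpha> \<theta> s v \<partial>lebn n)"
proof (cases "n = 0")
  case True
  have "Delta 0 = space (lebn 0)"
    by (auto simp: Delta_def)
  then have "(\<integral>\<^sup>+v. Ifun_integrand 0 \<alpha> \<theta> s v \<partial>lebn 0) = emeasure (lebn 0) (space (lebn 0))"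
    by (simp add: Ifun_integrand_def)
  then show ?thesis
    using True by (simp add: Ifun_def lebn_def PiM_empty)
qed (simp add: Ifun_def Ifun_integrand_def)

lemma all_lessThan_bij_betw_iff:
  assumes "bij_betw t {..<n} {..<n}"
  shows "(\<forall>i<n. P (t i)) \<longleftrightarrow> (\<forall>i<n. P i)"
proof -
  have "(\<forall>i<n. P (t i)) \<longleftrightarrow> (\<forall>j\<in>t ` {..<n}. P j)"
    by auto
  then show ?thesis
    using bij_betw_imp_surj_on[OF assms] by auto
qed

lemma Ifun_integrand_reindex:
  assumes x: "x \<in> space (lebn n)" and t: "bij_betw t {..<n} {..<n}"
  shows "Ifun_integrand n \<alpha> \<theta> s (\<lambda>i\<in>{..<n}. x (t i)) = Ifun_integrand n \<alpha> \<theta> s x"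
proof -
  have prod_eq: "(\<Prod>i<n. g (x (t i))) = (\<Prod>i<n. g (x i))" for g :: "real \<Rightarrow> real"
    using prod.reindex_bij_betw[OF t, of "\<lambda>i. g (x i)"] by simp
  have sum_eq: "(\<Sum>i<n. x (t i)) = (\<Sum>i<n. x i)"
    using sum.reindex_bij_betw[OF t, of x] by simp
  have "(\<lambda>i\<in>{..<n}. x (t i)) \<in> Delta n \<longleftrightarrow> x \<in> Delta n"
    using x sum_eq all_lessThan_bij_betw_iff[OF t, of "\<lambda>i. 0 \<le> x i"]
    by (simp add: Delta_def lebn_def space_PiM)
  then have "indicator (Delta n) (\<lambda>i\<in>{..<n}. x (t i)) = (indicator (Delta n) x :: ennreal)"
    by (simp add: indicator_def)
  then show ?thesis
    using prod_eq[of "\<lambda>y. indicator {1..} (s * y) / y powr (\<alpha> + 1)"] sum_eq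
    by (simp add: Ifun_integrand_def)
qed

lemma indicator_min_coord_reindex:
  assumes t: "bij_betw t {..<n} {..<n}" and k: "k < n"
  shows "indicator (min_coord n k) (\<lambda>i\<in>{..<n}. x (t i)) = (indicator (min_coord n (t k)) x :: ennreal)"
proof -
  have "(\<lambda>i\<in>{..<n}. x (t i)) \<in> min_coord n k \<longleftrightarrow> x \<in> min_coord n (t k)"
    using all_lessThan_bij_betw_iff[OF t, of "\<lambda>j. x (t k) \<le> x j"] k by (simp add: min_coord_def)
  then show ?thesis
    by (simp add: indicator_def)
qed

lemma sum_indicator_min_coord:
  assumes n: "n \<ge> 1" and distinct: "\<forall>i<n. \<forall>j<n. i \<noteq> j \<longrightarrow> x i \<noteq> x j"
  shows "(\<Sum>k<n. indicator (min_coord n k) x :: ennreal) = 1"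
proof -
  have "x ` {..<n} \<noteq> {}"
    using n by (simp add: lessThan_empty_iff)
  then have "Min (x ` {..<n}) \<in> x ` {..<n}"
    by (intro Min_in) auto
  then obtain k0 where k0: "k0 < n" "x k0 = Min (x ` {..<n})"
    by (metis imageE lessThan_iff)
  have "indicator (min_coord n k) x = (if k = k0 then 1 else 0 :: ennreal)" if "k < n" for k
  proof (cases "k = k0")
    case False
    have "x k0 \<le> x k"
      using k0 that by simp
    then have "\<not> x k \<le> x k0"
      using distinct k0(1) that False by fastforce
    then show ?thesis
      using k0(1) False by (auto simp: min_coord_def indicator_def)
  qed (use k0 in \<open>simp add: min_coord_def\<close>)
  then show ?thesis
    using k0(1) by simp
qed

lemma nn_integral_Ifun_integrand_split_min:
  assumes "n \<ge> 1"
  shows "(\<integral>\<^sup>+x. Ifun_integrand n \<alpha> \<theta> s x \<partial>lebn n)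
    = (\<Sum>k<n. \<integral>\<^sup>+x. Ifun_integrand n \<alpha> \<theta> s x * indicator (min_coord n k) x \<partial>lebn n)"
proof -
  have "AE x in lebn n. \<forall>i\<in>{..<n}. \<forall>j\<in>{..<n}. i \<noteq> j \<longrightarrow> x i \<noteq> x j"
    unfolding lebn_def by (intro AE_finite_allI AE_impI AE_PiM_lborel_coords_neq) auto
  then have "AE x in lebn n. Ifun_integrand n \<alpha> \<theta> s x
      = (\<Sum>k<n. Ifun_integrand n \<alpha> \<theta> s x * indicator (min_coord n k) x)"
    by eventually_elim (simp add: sum_distrib_left[symmetric] sum_indicator_min_coord[OF assms])
  then have "(\<integral>\<^sup>+x. Ifun_integrand n \<alpha> \<theta> s x \<partial>lebn n)
      = (\<integral>\<^sup>+x. (\<Sum>k<n. Ifun_integrand n \<alpha> \<theta> s x * indicator (min_coord n k) x) \<partial>lebn n)"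
    by (rule nn_integral_cong_AE)
  also have "\<dots> = (\<Sum>k<n. \<integral>\<^sup>+x. Ifun_integrand n \<alpha> \<theta> s x * indicator (min_coord n k) x \<partial>lebn n)"
    by (rule nn_integral_sum) auto
  finally show ?thesis .
qed

lemma nn_integral_min_coord_eq:
  assumes k: "k < n" and l: "l < n"
  shows "(\<integral>\<^sup>+x. Ifun_integrand n \<alpha> \<theta> s x * indicator (min_coord n k) x \<partial>lebn n)
    = (\<integral>\<^sup>+x. Ifun_integrand n \<alpha> \<theta> s x * indicator (min_coord n l) x \<partial>lebn n)"
proof -
  let ?t = "Transposition.transpose k l"
  have t: "bij_betw ?t {..<n} {..<n}"
    using k l by (intro permutes_imp_bij permutes_swap_id) auto
  have "(\<integral>\<^sup>+x. Ifun_integrand n \<alpha> \<theta> s x * indicator (min_coord n k) x \<partial>lebn n)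
      = (\<integral>\<^sup>+x. Ifun_integrand n \<alpha> \<theta> s (\<lambda>i\<in>{..<n}. x (?t i))
          * indicator (min_coord n k) (\<lambda>i\<in>{..<n}. x (?t i)) \<partial>lebn n)"
    using k unfolding lebn_def
    by (intro nn_integral_PiM_lborel_reindex[OF _ t, symmetric]) (auto simp: lebn_def[symmetric])
  also have "\<dots> = (\<integral>\<^sup>+x. Ifun_integrand n \<alpha> \<theta> s x * indicator (min_coord n l) x \<partial>lebn n)"
    using k by (intro nn_integral_cong)
      (simp add: Ifun_integrand_reindex[OF _ t] indicator_min_coord_reindex[OF t])
  finally show ?thesis .
qed

lemma prod_inverse_scaled_powr:
  fixes c p :: real
  assumes "c > 0" and "\<And>i. i \<in> A \<Longrightarrow> w i > 0"
  shows "(\<Prod>i\<in>A. 1 / (c * w i) powr p) = c powr (- p * real (card A)) * (\<Prod>i\<in>A. 1 / w i powr p)"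
proof -
  have "(\<Prod>i\<in>A. 1 / (c * w i) powr p) = (\<Prod>i\<in>A. c powr (- p) * (1 / w i powr p))"
    using assms by (intro prod.cong) (auto simp: powr_mult powr_minus_divide)
  also have "\<dots> = (c powr (- p)) ^ card A * (\<Prod>i\<in>A. 1 / w i powr p)"
    by (simp only: prod.distrib prod_constant)
  finally show ?thesis
    using assms(1) by (simp add: powr_power mult.commute)
qed

lemma Delta_Suc_upd_scale_iff:
  assumes w: "w \<in> space (lebn m)" and v: "0 \<le> v" "v < 1"
  shows "(\<lambda>i\<in>{..<m}. (1 - v) * w i)(m := v) \<in> Delta (Suc m) \<longleftrightarrow> w \<in> Delta m"
proof -
  define z where "z = (\<lambda>i\<in>{..<m}. (1 - v) * w i)(m := v)"
  have c: "1 - v > 0"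
    using v by simp
  have "z \<in> space (lebn (Suc m))"
    using w by (auto simp: z_def lebn_def space_PiM PiE_def extensional_def)
  moreover have "(\<forall>i<Suc m. 0 \<le> z i) \<longleftrightarrow> (\<forall>i<m. 0 \<le> w i)"
    using c v by (auto simp: z_def less_Suc_eq zero_le_mult_iff)
  moreover have "(\<Sum>i<Suc m. z i) \<le> 1 \<longleftrightarrow> (1 - v) * (\<Sum>i<m. w i) \<le> (1 - v) * 1"
    by (simp add: z_def sum_distrib_left algebra_simps)
  ultimately show ?thesis
    using w c by (simp add: z_def[symmetric] Delta_def)
qed

lemma scaled_integrand_powr_identity:
  fixes c v \<sigma> \<alpha> \<theta> :: real
  assumes c: "c > 0" and \<sigma>: "\<sigma> \<ge> 0" and w: "\<And>i. i < m \<Longrightarrow> w i > 0"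
  shows "(\<Prod>i<m. 1 / (c * w i) powr (\<alpha> + 1)) / v powr (\<alpha> + 1) * (c * \<sigma>) powr (\<theta> + \<alpha> * real (Suc m) - 1)
    = c powr (\<theta> + \<alpha> - 1 - real m) / v powr (\<alpha> + 1)
      * ((\<Prod>i<m. 1 / w i powr (\<alpha> + 1)) * \<sigma> powr (\<theta> + \<alpha> + \<alpha> * real m - 1))"
proof -
  have "(c * \<sigma>) powr (\<theta> + \<alpha> * real (Suc m) - 1)
      = c powr (\<theta> + \<alpha> * real (Suc m) - 1) * \<sigma> powr (\<theta> + \<alpha> + \<alpha> * real m - 1)"
  proof -
    have "\<theta> + \<alpha> * real (Suc m) - 1 = \<theta> + \<alpha> + \<alpha> * real m - 1"
      by (simp add: algebra_simps)
    then show ?thesis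
      using c \<sigma> by (simp only: powr_mult less_imp_le)
  qed
  moreover have "c powr (- (\<alpha> + 1) * real m) * c powr (\<theta> + \<alpha> * real (Suc m) - 1)
      = c powr (\<theta> + \<alpha> - 1 - real m)"
    by (simp add: powr_add[symmetric] algebra_simps)
  ultimately show ?thesis
    using prod_inverse_scaled_powr[OF c, of "{..<m}" w "\<alpha> + 1"] w by (simp add: field_simps)
qed

lemma Ifun_integrand_upd_scale_active:
  fixes v s :: real
  assumes w: "w \<in> Delta m" "\<And>j. j < m \<Longrightarrow> 1 \<le> (1 - v) / v * w j"
    and v: "v < 1" "1 \<le> s * v" and s: "s > 0"
  defines "z \<equiv> (\<lambda>i\<in>{..<m}. (1 - v) * w i)(m := v)"
  shows "Ifun_integrand (Suc m) \<alpha> \<theta> s z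
    = ennreal ((1 - v) powr (\<theta> + \<alpha> - 1 - real m) / v powr (\<alpha> + 1))
      * Ifun_integrand m \<alpha> (\<theta> + \<alpha>) ((1 - v) / v) w"
proof -
  define c r \<sigma> where "c = 1 - v" and "r = (1 - v) / v" and "\<sigma> = 1 - (\<Sum>j<m. w j)"
  have v0: "v > 0"
    using zero_less_mult_pos[of s v] s v by linarith
  have c0: "c > 0" and r0: "r > 0"
    using v v0 by (simp_all add: c_def r_def)
  have w0: "w j > 0" if "j < m" for j
    using zero_less_mult_pos[of r "w j"] w(2)[OF that] r0 by (simp add: r_def)
  have sz: "1 \<le> s * (c * w j)" if "j < m" for j
  proof -
    have "v \<le> c * w j"
      using w(2)[OF that] v0 by (simp add: c_def field_simps)
    then show ?thesis
      using mult_left_mono[of v "c * w j" s] s v by linarith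
  qed
  have zD: "z \<in> Delta (Suc m)"
    using Delta_Suc_upd_scale_iff[of w m v] w(1) v v0 by (simp add: z_def Delta_def)
  have prod_z: "(\<Prod>i<Suc m. indicator {1..} (s * z i) / z i powr (\<alpha> + 1))
      = (\<Prod>i<m. 1 / (c * w i) powr (\<alpha> + 1)) / v powr (\<alpha> + 1)"
    using sz v(2) by (simp add: z_def c_def)
  have prod_w: "(\<Prod>i<m. indicator {1..} (r * w i) / w i powr (\<alpha> + 1)) = (\<Prod>i<m. 1 / w i powr (\<alpha> + 1))"
    using w(2) by (intro prod.cong) (auto simp: r_def)
  have sum_z: "1 - (\<Sum>j<Suc m. z j) = c * \<sigma>"
    by (simp add: z_def \<sigma>_def c_def sum_distrib_left algebra_simps)
  have "\<sigma> \<ge> 0"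
    using w(1) by (simp add: \<sigma>_def Delta_def)
  note identity = scaled_integrand_powr_identity[where m=m and w=w and v=v and \<alpha>=\<alpha> and \<theta>=\<theta>,
      OF c0 this w0]
  have K0: "0 \<le> c powr (\<theta> + \<alpha> - 1 - real m) / v powr (\<alpha> + 1)"
    by simp
  show ?thesis
    unfolding Ifun_integrand_def r_def[symmetric] unfolding c_def[symmetric] \<sigma>_def[symmetric]
    by (simp only: prod_z prod_w sum_z identity indicator_simps(1)[OF zD] indicator_simps(1)[OF w(1)]
        mult_1_right ennreal_mult'[OF K0])
qed

lemma Ifun_integrand_upd_scale:
  fixes v s :: real
  assumes w: "w \<in> space (lebn m)" and v: "v < 1" "1 \<le> s * v" and s: "s > 0"
  defines "z \<equiv> (\<lambda>i\<in>{..<m}. (1 - v) * w i)(m := v)"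
  shows "Ifun_integrand (Suc m) \<alpha> \<theta> s z * indicator (min_coord (Suc m) m) z
    = ennreal ((1 - v) powr (\<theta> + \<alpha> - 1 - real m) / v powr (\<alpha> + 1))
      * Ifun_integrand m \<alpha> (\<theta> + \<alpha>) ((1 - v) / v) w"
proof -
  have v0: "v > 0"
    using zero_less_mult_pos[of s v] s v by linarith
  have min_iff: "z \<in> min_coord (Suc m) m \<longleftrightarrow> (\<forall>j<m. 1 \<le> (1 - v) / v * w j)"
    using v0 by (auto simp: min_coord_def less_Suc_eq z_def field_simps)
  have Delta_iff: "z \<in> Delta (Suc m) \<longleftrightarrow> w \<in> Delta m"
    unfolding z_def using Delta_Suc_upd_scale_iff[OF w] v0 v by simp
  show ?thesis
  proof (cases "w \<in> Delta m \<and> (\<forall>j<m. 1 \<le> (1 - v) / v * w j)")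
    case True
    then have wD: "w \<in> Delta m" and wr: "\<And>j. j < m \<Longrightarrow> 1 \<le> (1 - v) / v * w j"
      by auto
    show ?thesis
      using True min_iff Ifun_integrand_upd_scale_active[OF wD wr v s, where \<alpha>=\<alpha> and \<theta>=\<theta>]
      by (simp add: z_def)
  next
    case False
    then consider "w \<notin> Delta m" | j where "j < m" "(1 - v) / v * w j < 1"
      by fastforce
    then show ?thesis
    proof cases
      case 1
      then show ?thesis
        using Delta_iff by (simp add: Ifun_integrand_def)
    next
      case 2
      then have "z \<notin> min_coord (Suc m) m"
        using min_iff by auto
      moreover have prod_0: "(\<Prod>i<m. indicator {1..} ((1 - v) / v * w i) / w i powr (\<alpha> + 1)) = 0"
        using 2 by (intro prod_zero) (auto intro!: bexI[of _ j])
      ultimately show ?thesis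
        unfolding Ifun_integrand_def prod_0 by simp
    qed
  qed
qed

lemma Ifun_integrand_upd_eq_0:
  assumes "s * v < 1 \<or> 1 < v"
  shows "Ifun_integrand (Suc m) \<alpha> \<theta> s (x(m := v)) = 0"
proof (cases "s * v < 1")
  case True
  then have prod_0: "(\<Prod>i<Suc m. indicator {1..} (s * (x(m := v)) i) / (x(m := v)) i powr (\<alpha> + 1)) = 0"
    by (intro prod_zero) (auto intro!: bexI[of _ m])
  show ?thesis
    unfolding Ifun_integrand_def prod_0 by simp
next
  case False
  then have "1 < v"
    using assms by simp
  have "x(m := v) \<notin> Delta (Suc m)"
  proof
    assume D: "x(m := v) \<in> Delta (Suc m)"
    then have "(x(m := v)) m \<le> (\<Sum>j<Suc m. (x(m := v)) j)"
      by (intro member_le_sum) (auto simp: Delta_def)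
    with D \<open>1 < v\<close> show False
      by (simp add: Delta_def)
  qed
  then show ?thesis
    by (simp add: Ifun_integrand_def)
qed

lemma nn_integral_Ifun_integrand_fix_last:
  assumes v: "v < 1" "1 \<le> s * v" and s: "s > 0"
  shows "(\<integral>\<^sup>+x. Ifun_integrand (Suc m) \<alpha> \<theta> s (x(m := v))
        * indicator (min_coord (Suc m) m) (x(m := v)) \<partial>lebn m)
    = ennreal ((1 - v) powr (\<theta> + \<alpha> - 1) / v powr (\<alpha> + 1)) * Ifun m \<alpha> (\<theta> + \<alpha>) ((1 - v) / v)"
proof -
  define G where
    "G x = Ifun_integrand (Suc m) \<alpha> \<theta> s (x(m := v)) * indicator (min_coord (Suc m) m) (x(m := v))" for x
  define K where "K = (1 - v) powr (\<theta> + \<alpha> - 1 - real m) / v powr (\<alpha> + 1)"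
  have c0: "1 - v > 0"
    using v by simp
  have "G \<in> borel_measurable (lebn m)"
    unfolding G_def by measurable
  then have "integral\<^sup>N (lebn m) G = ennreal ((1 - v) ^ m) * (\<integral>\<^sup>+w. G (\<lambda>i\<in>{..<m}. (1 - v) * w i) \<partial>lebn m)"
    using nn_integral_PiM_lborel_scale[of "{..<m}" "1 - v" G] c0 unfolding lebn_def by simp
  also have "(\<integral>\<^sup>+w. G (\<lambda>i\<in>{..<m}. (1 - v) * w i) \<partial>lebn m)
      = (\<integral>\<^sup>+w. ennreal K * Ifun_integrand m \<alpha> (\<theta> + \<alpha>) ((1 - v) / v) w \<partial>lebn m)"
    by (rule nn_integral_cong) (unfold G_def K_def, rule Ifun_integrand_upd_scale[OF _ v s])
  also have "\<dots> = ennreal K * Ifun m \<alpha> (\<theta> + \<alpha>) ((1 - v) / v)"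
    by (simp add: nn_integral_cmult Ifun_eq_nn_integral_integrand)
  also have "ennreal ((1 - v) ^ m) * (ennreal K * Ifun m \<alpha> (\<theta> + \<alpha>) ((1 - v) / v))
      = ennreal ((1 - v) ^ m * K) * Ifun m \<alpha> (\<theta> + \<alpha>) ((1 - v) / v)"
    using c0 by (simp add: ennreal_mult' mult.assoc)
  also have "(1 - v) ^ m * K = (1 - v) powr (\<theta> + \<alpha> - 1) / v powr (\<alpha> + 1)"
    using c0 by (simp add: K_def powr_realpow[symmetric] powr_add[symmetric] algebra_simps)
  finally show ?thesis
    by (simp add: G_def)
qed

lemma nn_integral_min_coord_last:
  assumes s: "s > 0"
  shows "(\<integral>\<^sup>+x. Ifun_integrand (Suc m) \<alpha> \<theta> s x * indicator (min_coord (Suc m) m) x \<partial>lebn (Suc m))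
    = (\<integral>\<^sup>+v \<in> {min (1 / s) 1..1}.
        ennreal ((1 - v) powr (\<theta> + \<alpha> - 1) / v powr (\<alpha> + 1)) * Ifun m \<alpha> (\<theta> + \<alpha>) ((1 - v) / v) \<partial>lborel)"
proof -
  interpret product_sigma_finite "\<lambda>_::nat. lborel::real measure"
    by (rule product_sigma_finite_lborel)
  have "(\<lambda>x. Ifun_integrand (Suc m) \<alpha> \<theta> s x * indicator (min_coord (Suc m) m) x)
      \<in> borel_measurable (lebn (Suc m))"
    by measurable
  then have "(\<integral>\<^sup>+x. Ifun_integrand (Suc m) \<alpha> \<theta> s x * indicator (min_coord (Suc m) m) x \<partial>lebn (Suc m))
      = (\<integral>\<^sup>+v. (\<integral>\<^sup>+x. Ifun_integrand (Suc m) \<alpha> \<theta> s (x(m := v))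
          * indicator (min_coord (Suc m) m) (x(m := v)) \<partial>lebn m) \<partial>lborel)"
    unfolding lebn_def lessThan_Suc by (intro product_nn_integral_insert_rev) auto
  also have "\<dots> = (\<integral>\<^sup>+v \<in> {min (1 / s) 1..1}.
      ennreal ((1 - v) powr (\<theta> + \<alpha> - 1) / v powr (\<alpha> + 1)) * Ifun m \<alpha> (\<theta> + \<alpha>) ((1 - v) / v) \<partial>lborel)"
  proof (rule nn_integral_cong_AE)
    show "AE v in lborel.
      (\<integral>\<^sup>+x. Ifun_integrand (Suc m) \<alpha> \<theta> s (x(m := v)) * indicator (min_coord (Suc m) m) (x(m := v)) \<partial>lebn m)
      = ennreal ((1 - v) powr (\<theta> + \<alpha> - 1) / v powr (\<alpha> + 1)) * Ifun m \<alpha> (\<theta> + \<alpha>) ((1 - v) / v)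
        * indicator {min (1 / s) 1..1} v"
      using AE_lborel_singleton[of 1]
    proof eventually_elim
      case (elim v)
      show ?case
      proof (cases "1 \<le> s * v \<and> v < 1")
        case True
        then have "v \<in> {min (1 / s) 1..1}"
          using s by (auto simp: min_le_iff_disj field_simps)
        then show ?thesis
          using True s by (simp add: nn_integral_Ifun_integrand_fix_last)
      next
        case False
        then have "s * v < 1 \<or> 1 < v" and "v \<notin> {min (1 / s) 1..1}"
          using elim s by (auto simp: min_le_iff_disj field_simps)
        then show ?thesis
          by (simp add: Ifun_integrand_upd_eq_0)
      qed
    qed
  qed
  finally show ?thesis .
qed

theorem lemma4p1:
  fixes \<alpha> \<theta> s :: real and n :: nat
  assumes "0 \<le> \<alpha>" "\<alpha> < 1" "\<theta> > - \<alpha>" "n \<ge> 1" "s > 0"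
  shows "Ifun n \<alpha> \<theta> s =
    of_nat n * (\<integral>\<^sup>+ v \<in> {min (1 / s) 1..1}.
       ennreal ((1 - v) powr (\<theta> + \<alpha> - 1) / v powr (\<alpha> + 1))
       * Ifun (n - 1) \<alpha> (\<theta> + \<alpha>) ((1 - v) / v) \<partial>lborel)"
proof -
  obtain m where n: "n = Suc m"
    using \<open>n \<ge> 1\<close> by (cases n) auto
  let ?piece = "\<lambda>k. \<integral>\<^sup>+x. Ifun_integrand n \<alpha> \<theta> s x * indicator (min_coord n k) x \<partial>lebn n"
  have "Ifun n \<alpha> \<theta> s = (\<Sum>k<n. ?piece k)"
    using \<open>n \<ge> 1\<close> by (simp add: Ifun_eq_nn_integral_integrand nn_integral_Ifun_integrand_split_min)
  also have "\<dots> = (\<Sum>k<n. ?piece m)"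
    using n by (intro sum.cong refl nn_integral_min_coord_eq) auto
  also have "\<dots> = of_nat n * ?piece m"
    by simp
  finally show ?thesis
    using nn_integral_min_coord_last[OF \<open>s > 0\<close>] by (simp add: n)
qed

end
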